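(* Under Assumptions A2 and A3, for every $\gamma\in(0,q-2)$, with $\xi_t=[y_t^\top,u_t^\top]^\top$, $$\frac1T\sum_{t=0}^{T-1}\|\xi_t\|^{2+\gamma}=O(1)\quad\text{almost surely as }T\to\infty.$$ Consequently, if in addition A1 and A4 hold and $\hat\theta_t$, $\phi_t=\nabla_\theta^\top h(\hat\theta_t,y_t,u_t)$ are generated by Algorithm 1, then $r_T=\sum_{i=0}^T\|\phi_i\|^2=O(T)$ almost surely.
   Context: Let $\{\mathcal F_t\}_{t\ge0}$ be a nondecreasing sequence of $\sigma$-algebras. Consider the discrete-time stochastic system, for all $t\ge0$, $$x_{t+1}=h(\theta^*,x_t,u_t)+w_{t+1},\qquad y_{t+1}=x_{t+1},$$ with $y_0=x_0$, where $\theta^*\in\mathbb R^p$ is unknown, $x_t,y_t,w_t\in\mathbb R^n$, $u_t\in\mathbb R^m$, and $h:\mathbb R^p\times\mathbb R^n\times\mathbb R^m\to\mathbb R^n$ is differentiable in $\theta$ with Jacobian $\nabla_\theta h(\theta,x,u)\in\mathbb R^{n\times p}$. Inputs are $u_t=\pi(x_t)+\epsilon_t$, where $\pi:\mathbb R^n\to\mathbb R^m$ is a fixed (unknown) policy and $\epsilon_t$ an exploration signal; $x_t,y_t,u_t$ (hence $\nabla_\theta h(\theta^*,x_t,u_t)$) are $\mathcal F_t$-measurable. Loss: $\mathcal L(\theta,y,u)=\|h(\theta^*,y,u)-h(\theta,y,u)\|^2$. The system is called $\rho$-stable if there exist $\rho\in(0,1)$ and a norm $\|\cdot\|_1$ on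 $\mathbb R^n$ with $\|h(\theta^*,x_t,u_t)\|_1\le\rho\|x_t\|_1$ for all $t\ge0$. Assumptions. (A1) There is a known $D>0$ with $\|\theta^*\|\le D$. (A2) $\{w_{t+1},\mathcal F_{t+1}\}$ is a martingale difference sequence ($w_{t+1}$ is $\mathcal F_{t+1}$-measurable, $\mathbb E[w_{t+1}\mid\mathcal F_t]=0$) and for some $q>2$, $\sup_{t\ge0}\mathbb E[\|w_{t+1}\|^q\mid\mathcal F_t]<\infty$ a.s. (A3) $\pi$ is Lipschitz: $\|\pi(x)-\pi(y)\|\le L\|x-y\|$; $\|\epsilon_t\|\le\bar\epsilon$ for all $t$; and the closed-loop system is $\rho$-stable. (A4) There is a function $r\mapsto\alpha(r)>0$ and a constant $\beta\ge1$ such that for every $r>0$, all $t\ge0$, and all $\theta$ with $\|\theta-\theta^*\|\le r$, $\|y_t\|\le r$, $\|u_t\|\le r$: $$\langle\theta-\theta^*,\nabla_\theta\mathcal L(\theta,y_t,u_t)\rangle\ge\alpha(r)\,\|\nabla_\theta h(\theta,y_t,u_t)(\theta-\theta^* )\|^2,\qquad \mathcal L(\theta,y_t,u_t)\le\beta\langle\theta-\theta^*,\nabla_\theta\mathcal L(\theta,y_t,u_t)\rangle;$$ $\nabla_\theta h(\theta,y_t,u_t)$ is continuous in $\theta$; and for every $r>0$ there is $M(r)>0$ with $\|\nabla_\theta h(\theta,a_1,b_1)-\nabla_\theta h(\theta,a_2,b_2)\|\le M(r)\|\xi_1-\xi_2\|$ for all $a_i\in\mathbb R^n$, $b_i\in\mathbb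 R^m$, $\|\theta-\theta^*\|\le r$, where $\xi_i=[a_i^\top,b_i^\top]^\top$. Algorithm 1. Take arbitrary $\hat\theta_0\in\mathbb R^p$ and $P_0=I_p$. For $t\ge0$, with $\phi_t=\nabla_\theta^\top h(\hat\theta_t,y_t,u_t)\in\mathbb R^{p\times n}$ and $\alpha_t=\alpha(\|y_t\|+\|u_t\|+D)$, the quantities $\eta_t>0$, $\Gamma_t$, $P_{t+1}$, $\hat\theta_{t+1}$ satisfy $$\Gamma_t=(I+\eta_t^2\phi_t^\top P_t\phi_t)^{-1},\quad P_{t+1}=P_t-\eta_t^2P_t\phi_t\Gamma_t\phi_t^\top P_t,\quad \eta_t=\frac{1}{\alpha_t^{-1}+2\beta\|\phi_t^\top P_{t+1}\phi_t\|},$$ $$\hat\theta_{t+1}=\Pi_{P_{t+1}^{-1}}\big\{\hat\theta_t+\eta_tP_{t+1}\phi_t\,[y_{t+1}-h(\hat\theta_t,y_t,u_t)]\big\},$$ where $\Pi_{P^{-1}}\{x\}=\arg\min_{\|\omega\|\le D}(x-\omega)^\top P^{-1}(x-\omega)$ (so $\eta_t$ and $P_{t+1}$ are determined jointly by these relations). *)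

theory Defs
  imports "HOL-Probability.Probability" "HOL-Library.Landau_Symbols"
begin

definition is_norm :: "('a::real_vector \<Rightarrow> real) \<Rightarrow> bool" where
  "is_norm N \<longleftrightarrow> (\<forall>x. 0 \<le> N x) \<and> (\<forall>x. N x = 0 \<longleftrightarrow> x = 0)
     \<and> (\<forall>c x. N (c *\<^sub>R x) = \<bar>c\<bar> * N x) \<and> (\<forall>x y. N (x + y) \<le> N x + N y)"

definition loss ::
  "('p \<Rightarrow> 'x \<Rightarrow> 'u \<Rightarrow> 'y::real_normed_vector) \<Rightarrow> 'p \<Rightarrow> 'p \<Rightarrow> 'x \<Rightarrow> 'u \<Rightarrow> real" where
  "loss h ths th y u = (norm (h ths y u - h th y u))\<^sup>2"

text \<open>Gradient in theta of the loss, computed by the chain rule from the Jacobian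
  J(theta,y,u) of h in theta:  grad L = 2 J^T (h(theta,y,u) - h(theta*,y,u)).\<close>
definition loss_grad ::
  "(real^'p \<Rightarrow> 'x \<Rightarrow> 'u \<Rightarrow> real^'n) \<Rightarrow> (real^'p \<Rightarrow> 'x \<Rightarrow> 'u \<Rightarrow> real^'p^'n)
    \<Rightarrow> real^'p \<Rightarrow> real^'p \<Rightarrow> 'x \<Rightarrow> 'u \<Rightarrow> real^'p" where
  "loss_grad h J ths th y u = 2 *\<^sub>R (transpose (J th y u) *v (h th y u - h ths y u))"

definition is_proj :: "real^'p^'p \<Rightarrow> real \<Rightarrow> real^'p \<Rightarrow> real^'p \<Rightarrow> bool" where
  "is_proj Q D x z \<longleftrightarrow> norm z \<le> D \<and>
     (\<forall>v. norm v \<le> D \<longrightarrow> (x - z) \<bullet> (Q *v (x - z)) \<le> (x - v) \<bullet> (Q *v (x - v)))"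

end

theory Submission
  imports Defs
begin

text \<open>Let \<open>Z t = |w (t + 1)| powr p\<close> with \<open>p < q\<close>.  For some \<open>r \<in> (1, 2]\<close> we have
  \<open>Z t powr r \<le> 1 + |w (t + 1)| powr q\<close>, so the conditional \<open>r\<close>-th moments of \<open>Z t\<close> given
  \<open>F t\<close> are a.s. bounded by \<open>1 + k\<close> on events \<open>E\<^sub>k\<close> exhausting the space.  With uniformly
  bounded conditional moments a strong law holds: truncating \<open>Z t\<close> at \<open>t + 1\<close> changes only
  finitely many terms (Borel--Cantelli), and the martingale part of the truncations is
  controlled by orthogonality and Chebyshev's inequality along the dyadic times \<open>2\<^sup>j\<close>.  Hence
  \<open>\<Sum>t<T. Z t = O(T)\<close> a.s.  The contraction \<open>N (x (t + 1) - w (t + 1)) \<le> \<rho> N (x t)\<close> transfers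
  this to \<open>|x t| powr p\<close>, and the Lipschitz policy to \<open>|(x t, u t)| powr p\<close>.  Finally, the
  projection keeps the estimates \<open>\<theta> t\<close> bounded, so \<open>|\<phi> t| \<le> B + L |(x t, u t)|\<close>, whence
  \<open>|\<phi> t|\<^sup>2 \<le> C (1 + |(x t, u t)| powr p)\<close> for \<open>p \<ge> 2\<close>.\<close>

lemma prob_space_sigma_finite_subalgebra:
  assumes "prob_space M" and "subalgebra M F"
  shows "sigma_finite_subalgebra M F"
proof -
  interpret prob_space M by (rule assms)
  show ?thesis
    by (rule finite_measure_subalgebra_is_sigma_finite)
       (simp add: finite_measure_subalgebra_def finite_measure_subalgebra_axioms_def
          assms finite_measure_axioms)
qed

lemma measurable_filtration_mono:
  assumes subalg: "\<And>t. subalgebra M (G t)"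
    and mono: "\<And>t. sets (G t) \<subseteq> sets (G (Suc t))"
    and "s \<le> t" and "f \<in> borel_measurable (G s)"
  shows "f \<in> borel_measurable (G t)"
proof -
  have "sets (G s) \<subseteq> sets (G t)"
    using lift_Suc_mono_le[of "\<lambda>t. sets (G t)", OF mono \<open>s \<le> t\<close>] .
  then have "subalgebra (G t) (G s)"
    using subalg[of s] subalg[of t] by (simp add: subalgebra_def)
  then show ?thesis using assms(4) by (rule measurable_from_subalg)
qed

lemma nn_integral_le_of_nn_cond_exp_le:
  fixes f :: "'w \<Rightarrow> ennreal"
  assumes prob: "prob_space M" and subalg: "subalgebra M F"
    and [measurable]: "f \<in> borel_measurable M"
    and bound: "AE \<omega> in M. nn_cond_exp M F f \<omega> \<le> ennreal K"
  shows "(\<integral>\<^sup>+\<omega>. f \<omega> \<partial>M) \<le> ennreal K"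
proof -
  interpret prob_space M by (rule prob)
  interpret sigma_finite_subalgebra M F
    by (rule prob_space_sigma_finite_subalgebra[OF prob subalg])
  have "(\<integral>\<^sup>+\<omega>. f \<omega> \<partial>M) = (\<integral>\<^sup>+\<omega>. 1 * f \<omega> \<partial>M)" by simp
  also have "\<dots> = (\<integral>\<^sup>+\<omega>. 1 * nn_cond_exp M F f \<omega> \<partial>M)"
    by (rule nn_cond_exp_intg[symmetric]) auto
  also have "\<dots> \<le> (\<integral>\<^sup>+\<omega>. ennreal K \<partial>M)"
    by (rule nn_integral_mono_AE) (use bound in auto)
  also have "\<dots> = ennreal K" by (simp add: emeasure_space_1)
  finally show ?thesis .
qed

text \<open>A first Borel--Cantelli argument: by Markov's inequality
  \<open>P(Y\<^sub>t > t + 1) \<le> K (t + 1) powr (-r)\<close>, which is summable for \<open>r > 1\<close>.\<close>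
lemma AE_eventually_le_Suc_of_bounded_moments:
  fixes Y :: "nat \<Rightarrow> 'w \<Rightarrow> real"
  assumes prob: "prob_space M"
    and [measurable]: "\<And>t. Y t \<in> borel_measurable M"
    and r: "1 < r" and K: "0 \<le> K"
    and moment: "\<And>t. (\<integral>\<^sup>+\<omega>. ennreal (Y t \<omega> powr r) \<partial>M) \<le> ennreal K"
  shows "AE \<omega> in M. eventually (\<lambda>t. Y t \<omega> \<le> real t + 1) sequentially"
proof -
  interpret prob_space M by (rule prob)
  define A where "A t = {\<omega>\<in>space M. real t + 1 < Y t \<omega>}" for t
  have [measurable]: "A t \<in> sets M" for t unfolding A_def by measurable
  have PA: "measure M (A t) \<le> K * (real t + 1) powr (-r)" for t
  proof -
    define c where "c = (real t + 1) powr (-r)"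
    have c0: "0 < c" unfolding c_def by simp
    have sub: "A t \<subseteq> {\<omega>\<in>space M. 1 \<le> ennreal c * ennreal (Y t \<omega> powr r)}"
    proof
      fix \<omega> assume "\<omega> \<in> A t"
      then have \<omega>: "\<omega> \<in> space M" "real t + 1 < Y t \<omega>" unfolding A_def by auto
      have "(real t + 1) powr r \<le> Y t \<omega> powr r"
        by (rule powr_mono2) (use \<omega> r in auto)
      then have "c * (real t + 1) powr r \<le> c * Y t \<omega> powr r"
        using c0 by (simp add: mult_left_mono)
      moreover have "c * (real t + 1) powr r = 1"
        unfolding c_def by (simp add: powr_add[symmetric])
      ultimately have "ennreal 1 \<le> ennreal (c * Y t \<omega> powr r)"
        by (intro ennreal_leI) simp
      then show "\<omega> \<in> {\<omega>\<in>space M. 1 \<le> ennreal c * ennreal (Y t \<omega> powr r)}"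
        using \<omega> c0 by (simp add: ennreal_mult)
    qed
    have "emeasure M (A t) \<le> emeasure M {\<omega>\<in>space M. 1 \<le> ennreal c * ennreal (Y t \<omega> powr r)}"
      by (rule emeasure_mono[OF sub]) measurable
    also have "\<dots> \<le> ennreal c * (\<integral>\<^sup>+\<omega>. ennreal (Y t \<omega> powr r) * indicator (space M) \<omega> \<partial>M)"
      by (rule nn_integral_Markov_inequality) auto
    also have "(\<integral>\<^sup>+\<omega>. ennreal (Y t \<omega> powr r) * indicator (space M) \<omega> \<partial>M)
        = (\<integral>\<^sup>+\<omega>. ennreal (Y t \<omega> powr r) \<partial>M)"
      by (rule nn_integral_cong) auto
    also have "ennreal c * (\<integral>\<^sup>+\<omega>. ennreal (Y t \<omega> powr r) \<partial>M) \<le> ennreal c * ennreal K"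
      by (rule mult_left_mono[OF moment]) auto
    also have "\<dots> = ennreal (K * c)" using c0 K by (simp add: ennreal_mult mult.commute)
    finally show ?thesis unfolding c_def using K c0 by (simp add: emeasure_eq_measure c_def)
  qed
  have "summable (\<lambda>t. real (Suc t) powr (-r))"
    using r by (subst summable_Suc_iff) (simp add: summable_real_powr_iff)
  then have "summable (\<lambda>t. K * (real t + 1) powr (-r))" by (simp add: summable_mult add.commute)
  then have "summable (\<lambda>t. measure M (A t))"
    by (rule summable_comparison_test[rotated]) (use PA in auto)
  then have "AE \<omega> in M. eventually (\<lambda>t. \<omega> \<in> space M - A t) sequentially"
    by (intro borel_cantelli_AE1) (auto simp: emeasure_eq_measure)
  then show ?thesis
    by eventually_elim (auto simp: A_def elim!: eventually_mono)
qed

lemma real_cond_exp_le_of_cond_moment_le: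
  fixes Y Z :: "'w \<Rightarrow> real"
  assumes prob: "prob_space M" and subalg: "subalgebra M F"
    and [measurable]: "Y \<in> borel_measurable M" "Z \<in> borel_measurable M"
    and Z_nonneg: "\<And>\<omega>. 0 \<le> Z \<omega>" and Z_le: "\<And>\<omega>. Z \<omega> \<le> 1 + Y \<omega> powr r"
    and bound: "AE \<omega> in M. nn_cond_exp M F (\<lambda>\<omega>. ennreal (Y \<omega> powr r)) \<omega> \<le> ennreal K"
    and K: "0 \<le> K"
  shows "AE \<omega> in M. real_cond_exp M F Z \<omega> \<le> 1 + K"
proof -
  interpret sigma_finite_subalgebra M F
    by (rule prob_space_sigma_finite_subalgebra[OF prob subalg])
  have mono: "AE \<omega> in M. nn_cond_exp M F (\<lambda>\<omega>. ennreal (Z \<omega>)) \<omega>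
      \<le> nn_cond_exp M F (\<lambda>\<omega>. 1 + ennreal (Y \<omega> powr r)) \<omega>"
  proof (rule nn_cond_exp_mono)
    show "AE \<omega> in M. ennreal (Z \<omega>) \<le> 1 + ennreal (Y \<omega> powr r)"
      using Z_le by (intro AE_I2) (metis ennreal_leI ennreal_plus ennreal_1 powr_ge_zero zero_le_one)
  qed auto
  have sum: "AE \<omega> in M. nn_cond_exp M F (\<lambda>\<omega>. 1) \<omega> + nn_cond_exp M F (\<lambda>\<omega>. ennreal (Y \<omega> powr r)) \<omega>
      = nn_cond_exp M F (\<lambda>\<omega>. 1 + ennreal (Y \<omega> powr r)) \<omega>"
    by (rule nn_cond_exp_sum) auto
  have one: "AE \<omega> in M. 1 = nn_cond_exp M F (\<lambda>\<omega>. 1) \<omega>"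
    using nn_cond_exp_F_meas[of "\<lambda>\<omega>. 1"] by simp
  \<comment> \<open>\<open>real_cond_exp\<close> subtracts the conditional expectation of the negative part, which is 0\<close>
  have neg: "(\<lambda>\<omega>. ennreal (- Z \<omega>)) = (\<lambda>\<omega>. 0)" using Z_nonneg by (auto simp: ennreal_neg)
  have zero: "AE \<omega> in M. 0 = nn_cond_exp M F (\<lambda>\<omega>. 0) \<omega>"
    using nn_cond_exp_F_meas[of "\<lambda>\<omega>. 0"] by simp
  show ?thesis
    using mono sum one zero bound
  proof eventually_elim
    case (elim \<omega>)
    have "nn_cond_exp M F (\<lambda>\<omega>. ennreal (Z \<omega>)) \<omega> \<le> 1 + ennreal K"
      using elim by (metis add_left_mono order_trans)
    also have "\<dots> = ennreal (1 + K)" using K by (simp add: ennreal_plus)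
    finally have "enn2real (nn_cond_exp M F (\<lambda>\<omega>. ennreal (Z \<omega>)) \<omega>) \<le> 1 + K"
      by (rule enn2real_leI[rotated]) (use K in simp)
    then show ?case unfolding real_cond_exp_def neg using elim(4)[symmetric] by simp
  qed
qed

lemma integral_mult_diff_real_cond_exp_eq_0:
  fixes f y m :: "'w \<Rightarrow> real"
  assumes prob: "prob_space M" and subalg: "subalgebra M F"
    and [measurable]: "f \<in> borel_measurable F" "y \<in> borel_measurable M" "m \<in> borel_measurable M"
    and bounded: "\<And>\<omega>. \<bar>f \<omega>\<bar> \<le> bf" "\<And>\<omega>. \<bar>y \<omega>\<bar> \<le> by" "\<And>\<omega>. \<bar>m \<omega>\<bar> \<le> bm"
    and m_eq: "AE \<omega> in M. m \<omega> = real_cond_exp M F y \<omega>"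
  shows "(\<integral>\<omega>. f \<omega> * (y \<omega> - m \<omega>) \<partial>M) = 0"
proof -
  interpret sigma_finite_subalgebra M F
    by (rule prob_space_sigma_finite_subalgebra[OF prob subalg])
  interpret prob_space M by (rule prob)
  have [measurable]: "f \<in> borel_measurable M" by (rule measurable_from_subalg[OF subalg]) simp
  have bf: "0 \<le> bf" using bounded(1) abs_ge_zero order_trans by blast
  have int_fy: "integrable M (\<lambda>\<omega>. f \<omega> * y \<omega>)"
    by (rule integrable_const_bound[where B="bf * by"])
       (auto simp: abs_mult intro!: mult_mono bounded bf)
  have int_fm: "integrable M (\<lambda>\<omega>. f \<omega> * m \<omega>)"
    by (rule integrable_const_bound[where B="bf * bm"])
       (auto simp: abs_mult intro!: mult_mono bounded bf)
  have "(\<integral>\<omega>. f \<omega> * m \<omega> \<partial>M) = (\<integral>\<omega>. f \<omega> * real_cond_exp M F y \<omega> \<partial>M)"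
    by (rule integral_cong_AE) (use m_eq in auto)
  also have "\<dots> = (\<integral>\<omega>. f \<omega> * y \<omega> \<partial>M)"
    by (rule real_cond_exp_intg(2)[OF int_fy]) auto
  finally show ?thesis using int_fy int_fm by (simp add: right_diff_distrib)
qed

lemma square_le_square_of_abs_le: "\<bar>a::real\<bar> \<le> b \<Longrightarrow> a\<^sup>2 \<le> b\<^sup>2"
  by (metis abs_ge_zero power2_abs power_mono)

lemma integral_square_sum_martingale_differences:
  fixes y m :: "nat \<Rightarrow> 'w \<Rightarrow> real"
  assumes prob: "prob_space M"
    and subalg: "\<And>t. subalgebra M (G t)"
    and mono: "\<And>t. sets (G t) \<subseteq> sets (G (Suc t))"
    and y_meas: "\<And>t. y t \<in> borel_measurable (G (Suc t))" and y_bound: "\<And>t \<omega>. \<bar>y t \<omega>\<bar> \<le> b t"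
    and m_meas: "\<And>t. m t \<in> borel_measurable (G t)" and m_bound: "\<And>t \<omega>. \<bar>m t \<omega>\<bar> \<le> b t"
    and m_eq: "\<And>t. AE \<omega> in M. m t \<omega> = real_cond_exp M (G t) (y t) \<omega>"
  shows "(\<integral>\<omega>. (\<Sum>t<n. y t \<omega> - m t \<omega>)\<^sup>2 \<partial>M) = (\<Sum>t<n. \<integral>\<omega>. (y t \<omega> - m t \<omega>)\<^sup>2 \<partial>M)"
proof (induction n)
  case 0 then show ?case by simp
next
  case (Suc n)
  interpret prob_space M by (rule prob)
  have [measurable]: "y t \<in> borel_measurable M" "m t \<in> borel_measurable M" for t
    using measurable_from_subalg[OF subalg y_meas] measurable_from_subalg[OF subalg m_meas] .
  define S where "S \<omega> = (\<Sum>t<n. y t \<omega> - m t \<omega>)" for \<omega>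
  define d where "d \<omega> = y n \<omega> - m n \<omega>" for \<omega>
  have S_meas: "S \<in> borel_measurable (G n)"
  proof -
    have "y t \<in> borel_measurable (G n)" "m t \<in> borel_measurable (G n)" if "t < n" for t
      using measurable_filtration_mono[of M G, OF subalg mono, of "Suc t" n "y t"]
        measurable_filtration_mono[of M G, OF subalg mono, of t n "m t"] that y_meas m_meas by auto
    then show ?thesis unfolding S_def by (intro borel_measurable_sum borel_measurable_diff) auto
  qed
  have [measurable]: "S \<in> borel_measurable M" using measurable_from_subalg[OF subalg S_meas] .
  have [measurable]: "d \<in> borel_measurable M" unfolding d_def by measurable
  define bS where "bS = (\<Sum>t<n. 2 * b t)"
  have S_bound: "\<bar>S \<omega>\<bar> \<le> bS" for \<omega>
    unfolding S_def bS_def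
    by (rule order_trans[OF sum_abs], intro sum_mono)
       (metis y_bound m_bound abs_triangle_ineq4 add_mono mult_2 order_trans)
  have d_bound: "\<bar>d \<omega>\<bar> \<le> 2 * b n" for \<omega>
    unfolding d_def using y_bound[of n \<omega>] m_bound[of n \<omega>] by linarith
  have bS: "0 \<le> bS" using S_bound abs_ge_zero order_trans by blast
  have orth: "(\<integral>\<omega>. S \<omega> * d \<omega> \<partial>M) = 0"
    unfolding d_def
    by (rule integral_mult_diff_real_cond_exp_eq_0[OF prob subalg S_meas _ _ S_bound y_bound m_bound m_eq])
       auto
  have "integrable M (\<lambda>\<omega>. (S \<omega>)\<^sup>2)"
    by (rule integrable_const_bound[where B="bS\<^sup>2"]) (auto intro!: square_le_square_of_abs_le S_bound)
  moreover have "integrable M (\<lambda>\<omega>. (d \<omega>)\<^sup>2)"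
    by (rule integrable_const_bound[where B="(2 * b n)\<^sup>2"])
       (use square_le_square_of_abs_le[OF d_bound] in auto)
  moreover have "integrable M (\<lambda>\<omega>. 2 * (S \<omega> * d \<omega>))"
    by (rule integrable_const_bound[where B="2 * (bS * (2 * b n))"])
       (use mult_mono[OF S_bound d_bound bS abs_ge_zero] in \<open>auto simp: abs_mult mult_ac\<close>)
  ultimately have "(\<integral>\<omega>. (S \<omega>)\<^sup>2 + 2 * (S \<omega> * d \<omega>) + (d \<omega>)\<^sup>2 \<partial>M)
      = (\<integral>\<omega>. (S \<omega>)\<^sup>2 \<partial>M) + 2 * (\<integral>\<omega>. S \<omega> * d \<omega> \<partial>M) + (\<integral>\<omega>. (d \<omega>)\<^sup>2 \<partial>M)"
    by simp
  moreover have "(\<Sum>t<Suc n. y t \<omega> - m t \<omega>)\<^sup>2 = (S \<omega>)\<^sup>2 + 2 * (S \<omega> * d \<omega>) + (d \<omega>)\<^sup>2" for \<omega>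
    by (simp add: S_def d_def power2_sum)
  ultimately show ?case using Suc.IH orth by (simp add: S_def d_def)
qed

definition sums_linearly_bounded :: "(nat \<Rightarrow> real) \<Rightarrow> bool" where
  "sums_linearly_bounded f \<longleftrightarrow> (\<exists>C. \<forall>T. (\<Sum>t<T. f t) \<le> C * (real T + 1))"

lemma sums_linearly_bounded_affine:
  assumes le: "\<And>t. f t \<le> a + b * g t" and b: "0 \<le> b" and g: "sums_linearly_bounded g"
  shows "sums_linearly_bounded f"
proof -
  obtain C where C: "\<And>T. (\<Sum>t<T. g t) \<le> C * (real T + 1)"
    using g unfolding sums_linearly_bounded_def by blast
  have "(\<Sum>t<T. f t) \<le> (\<bar>a\<bar> + b * C) * (real T + 1)" for T
  proof -
    have "(\<Sum>t<T. f t) \<le> (\<Sum>t<T. a + b * g t)" by (intro sum_mono le)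
    also have "\<dots> = a * real T + b * (\<Sum>t<T. g t)" by (simp add: sum.distrib sum_distrib_left)
    also have "\<dots> \<le> \<bar>a\<bar> * (real T + 1) + b * (C * (real T + 1))"
    proof (intro add_mono mult_left_mono C b)
      show "a * real T \<le> \<bar>a\<bar> * (real T + 1)"
        by (rule order_trans[OF mult_right_mono[of a "\<bar>a\<bar>"] mult_left_mono]) auto
    qed
    finally show ?thesis by (simp add: algebra_simps)
  qed
  then show ?thesis unfolding sums_linearly_bounded_def by blast
qed

lemma bigo_sums_div_of_sums_linearly_bounded:
  assumes "sums_linearly_bounded f" and "\<And>t. 0 \<le> f t"
  shows "(\<lambda>T. (\<Sum>t<T. f t) / real T) \<in> O(\<lambda>_. 1)"
proof -
  obtain C where C: "\<And>T. (\<Sum>t<T. f t) \<le> C * (real T + 1)"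
    using assms(1) unfolding sums_linearly_bounded_def by blast
  have C0: "0 \<le> C" using C[of 0] by simp
  show ?thesis
  proof (rule bigoI[where c="2 * C"], unfold eventually_at_top_linorder, intro exI allI impI)
    fix T :: nat assume T: "T \<ge> 1"
    have "(\<Sum>t<T. f t) \<le> C * (2 * real T)"
      using C[of T] mult_left_mono[of "real T + 1" "2 * real T" C] T C0 by simp
    then have "(\<Sum>t<T. f t) / real T \<le> 2 * C" using T by (simp add: field_simps)
    then show "norm ((\<Sum>t<T. f t) / real T) \<le> 2 * C * norm (1::real)"
      using assms(2) by (simp add: sum_nonneg)
  qed
qed

lemma bigo_sums_atMost_of_sums_linearly_bounded:
  assumes "sums_linearly_bounded f" and "\<And>t. 0 \<le> f t"
  shows "(\<lambda>T. \<Sum>t\<le>T. f t) \<in> O(\<lambda>T. real T)"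
proof -
  obtain C where C: "\<And>T. (\<Sum>t<T. f t) \<le> C * (real T + 1)"
    using assms(1) unfolding sums_linearly_bounded_def by blast
  have C0: "0 \<le> C" using C[of 0] by simp
  show ?thesis
  proof (rule bigoI[where c="3 * C"], unfold eventually_at_top_linorder, intro exI allI impI)
    fix T :: nat assume T: "T \<ge> 1"
    have "(\<Sum>t\<le>T. f t) \<le> C * (3 * real T)"
      using C[of "Suc T"] mult_left_mono[of "real T + 2" "3 * real T" C] T C0
      by (simp add: lessThan_Suc_atMost add.commute)
    then show "norm (\<Sum>t\<le>T. f t) \<le> 3 * C * norm (real T)"
      using assms(2) by (simp add: sum_nonneg)
  qed
qed

lemma ex_power_of_two_between: "\<exists>j\<ge>j0. T \<le> (2::nat) ^ j \<and> 2 ^ j \<le> 2 ^ j0 + 2 * T"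
proof (induction T)
  case 0 then show ?case by auto
next
  case (Suc T)
  then obtain j where j: "j \<ge> j0" "T \<le> 2 ^ j" "2 ^ j \<le> (2::nat) ^ j0 + 2 * T" by auto
  show ?case
  proof (cases "Suc T \<le> 2 ^ j")
    case True then show ?thesis using j by (intro exI[of _ j]) auto
  next
    case False
    then have "2 ^ j = T" using j by auto
    then show ?thesis using j by (intro exI[of _ "Suc j"]) auto
  qed
qed

lemma sums_linearly_bounded_of_dyadic_blocks:
  fixes Y m :: "nat \<Rightarrow> real"
  assumes eventually_le: "eventually (\<lambda>t. Y t \<le> real t + 1) sequentially"
    and Y_nonneg: "\<And>t. 0 \<le> Y t"
    and m_le: "\<And>t. m t \<le> B" and B: "0 \<le> B"
    and dyadic: "eventually (\<lambda>j. \<bar>\<Sum>t<2 ^ j. min (Y t) (real t + 1) - m t\<bar> < 2 ^ j) sequentially"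
  shows "sums_linearly_bounded Y"
proof -
  obtain t0 where t0: "\<And>t. t \<ge> t0 \<Longrightarrow> Y t \<le> real t + 1"
    using eventually_le by (auto simp: eventually_sequentially)
  obtain j0 where j0: "\<And>j. j \<ge> j0 \<Longrightarrow> \<bar>\<Sum>t<2 ^ j. min (Y t) (real t + 1) - m t\<bar> < 2 ^ j"
    using dyadic by (auto simp: eventually_sequentially)
  define A where "A = (\<Sum>t<t0. Y t)"
  have A: "0 \<le> A" unfolding A_def by (intro sum_nonneg Y_nonneg)
  have "(\<Sum>t<T. Y t) \<le> (A + (1 + B) * 2 ^ j0 + 2 * (1 + B)) * (real T + 1)" for T
  proof -
    obtain j where j: "j \<ge> j0" "T \<le> 2 ^ j" "(2::nat) ^ j \<le> 2 ^ j0 + 2 * T"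
      using ex_power_of_two_between by blast
    have "real ((2::nat) ^ j) \<le> real (2 ^ j0 + 2 * T)" using j(3) by (simp only: of_nat_le_iff)
    then have j_real: "(2::real) ^ j \<le> 2 ^ j0 + 2 * real T" by simp
    have "(\<Sum>t<T. Y t) \<le> (\<Sum>t<T. min (Y t) (real t + 1) + (if t < t0 then Y t else 0))"
      by (intro sum_mono) (use t0 Y_nonneg in \<open>auto simp: min_def\<close>)
    also have "\<dots> = (\<Sum>t<T. min (Y t) (real t + 1)) + (\<Sum>t<T. if t < t0 then Y t else 0)"
      by (simp add: sum.distrib)
    also have "(\<Sum>t<T. if t < t0 then Y t else 0) \<le> (\<Sum>t<max T t0. if t < t0 then Y t else 0)"
      by (rule sum_mono2) (auto simp: Y_nonneg)
    also have "\<dots> = A"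
    proof -
      have "(\<Sum>t<max T t0. if t < t0 then Y t else 0) = sum Y ({..<max T t0} \<inter> {..<t0})"
        by (subst sum.inter_restrict) auto
      also have "{..<max T t0} \<inter> {..<t0} = {..<t0}" by auto
      finally show ?thesis by (simp add: A_def)
    qed
    also have "(\<Sum>t<T. min (Y t) (real t + 1)) \<le> (\<Sum>t<2 ^ j. min (Y t) (real t + 1))"
      by (rule sum_mono2) (use j Y_nonneg in auto)
    also have "\<dots> = (\<Sum>t<2 ^ j. min (Y t) (real t + 1) - m t) + (\<Sum>t<(2::nat) ^ j. m t)"
      by (simp add: sum_subtractf)
    also have "(\<Sum>t<2 ^ j. min (Y t) (real t + 1) - m t) \<le> 2 ^ j" using j0[OF j(1)] by linarith
    also have "(\<Sum>t<(2::nat) ^ j. m t) \<le> B * 2 ^ j"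
      using sum_mono[of "{..<(2::nat) ^ j}" m "\<lambda>_. B", OF m_le] by (simp add: mult.commute)
    finally have "(\<Sum>t<T. Y t) \<le> (1 + B) * 2 ^ j + A" by (simp add: algebra_simps)
    also have "(1 + B) * 2 ^ j \<le> (1 + B) * (2 ^ j0 + 2 * real T)"
      by (rule mult_left_mono[OF j_real]) (use B in simp)
    also have "(1 + B) * (2 ^ j0 + 2 * real T) + A \<le> (A + (1 + B) * 2 ^ j0 + 2 * (1 + B)) * (real T + 1)"
      using A B by (simp add: algebra_simps)
    finally show ?thesis by simp
  qed
  then show ?thesis unfolding sums_linearly_bounded_def by blast
qed

text \<open>Chebyshev's inequality at the dyadic times: the variance bound makes
  \<open>P(|S\<^bsub>2\<^sup>j\<^esub>| \<ge> 2\<^sup>j) \<le> C (2 powr (1 - r))\<^sup>j\<close> geometric, so Borel--Cantelli applies.\<close>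
lemma AE_eventually_dyadic_martingale_sum_less:
  fixes y m :: "nat \<Rightarrow> 'w \<Rightarrow> real"
  assumes prob: "prob_space M"
    and subalg: "\<And>t. subalgebra M (G t)"
    and mono: "\<And>t. sets (G t) \<subseteq> sets (G (Suc t))"
    and y_meas: "\<And>t. y t \<in> borel_measurable (G (Suc t))" and y_bound: "\<And>t \<omega>. \<bar>y t \<omega>\<bar> \<le> b t"
    and m_meas: "\<And>t. m t \<in> borel_measurable (G t)" and m_bound: "\<And>t \<omega>. \<bar>m t \<omega>\<bar> \<le> b t"
    and m_eq: "\<And>t. AE \<omega> in M. m t \<omega> = real_cond_exp M (G t) (y t) \<omega>"
    and r: "1 < r" "r \<le> 2" and C: "0 \<le> C"
    and variance: "\<And>t. (\<integral>\<omega>. (y t \<omega> - m t \<omega>)\<^sup>2 \<partial>M) \<le> C * (real t + 1) powr (2 - r)"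
  shows "AE \<omega> in M. eventually (\<lambda>j. \<bar>\<Sum>t<2 ^ j. y t \<omega> - m t \<omega>\<bar> < 2 ^ j) sequentially"
proof -
  interpret prob_space M by (rule prob)
  have [measurable]: "y t \<in> borel_measurable M" "m t \<in> borel_measurable M" for t
    using measurable_from_subalg[OF subalg y_meas] measurable_from_subalg[OF subalg m_meas] .
  define S where "S j \<omega> = (\<Sum>t<2 ^ j. y t \<omega> - m t \<omega>)" for j \<omega>
  have [measurable]: "S j \<in> borel_measurable M" for j unfolding S_def by measurable
  have S_variance: "(\<integral>\<omega>. (S j \<omega>)\<^sup>2 \<partial>M) \<le> 2 ^ j * (C * ((2::real) ^ j) powr (2 - r))" for j
  proof -
    have "(\<integral>\<omega>. (S j \<omega>)\<^sup>2 \<partial>M) = (\<Sum>t<2 ^ j. \<integral>\<omega>. (y t \<omega> - m t \<omega>)\<^sup>2 \<partial>M)"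
      unfolding S_def
      by (rule integral_square_sum_martingale_differences[of M G y b m, OF prob subalg mono y_meas y_bound
            m_meas m_bound m_eq])
    also have "\<dots> \<le> (\<Sum>t<(2::nat) ^ j. C * ((2::real) ^ j) powr (2 - r))"
    proof (rule sum_mono)
      fix t assume "t \<in> {..<(2::nat) ^ j}"
      then have "real t + 1 \<le> (2::real) ^ j"
        by (metis Suc_leI lessThan_iff of_nat_Suc of_nat_le_iff of_nat_numeral of_nat_power add.commute)
      then have "C * (real t + 1) powr (2 - r) \<le> C * ((2::real) ^ j) powr (2 - r)"
        using C r by (intro mult_left_mono powr_mono2) auto
      then show "(\<integral>\<omega>. (y t \<omega> - m t \<omega>)\<^sup>2 \<partial>M) \<le> C * ((2::real) ^ j) powr (2 - r)"
        using variance[of t] by linarith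
    qed
    finally show ?thesis by simp
  qed
  define A where "A j = {\<omega>\<in>space M. (2::real) ^ j \<le> \<bar>S j \<omega>\<bar>}" for j
  have [measurable]: "A j \<in> sets M" for j unfolding A_def by measurable
  have S_bound: "\<bar>S j \<omega>\<bar> \<le> (\<Sum>t<(2::nat) ^ j. 2 * b t)" for j \<omega>
    unfolding S_def
    by (rule order_trans[OF sum_abs], intro sum_mono)
       (metis y_bound m_bound abs_triangle_ineq4 add_mono mult_2 order_trans)
  have PA: "measure M (A j) \<le> C * (2 powr (1 - r)) ^ j" for j
  proof -
    have "integrable M (\<lambda>\<omega>. (S j \<omega>)\<^sup>2)"
      by (rule integrable_const_bound[where B="(\<Sum>t<(2::nat) ^ j. 2 * b t)\<^sup>2"])
         (auto intro!: square_le_square_of_abs_le S_bound)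
    then have "measure M (A j) \<le> (\<integral>\<omega>. (S j \<omega>)\<^sup>2 \<partial>M) / ((2::real) ^ j)\<^sup>2"
      unfolding A_def by (intro second_moment_method) auto
    also have "\<dots> \<le> 2 ^ j * (C * ((2::real) ^ j) powr (2 - r)) / ((2::real) ^ j)\<^sup>2"
      by (rule divide_right_mono[OF S_variance]) simp
    also have "\<dots> = C * (2 powr (1 - r)) ^ j"
    proof -
      define n where "n = (2::real) ^ j"
      have n: "0 < n" "n = 2 powr real j" unfolding n_def by (simp_all add: powr_realpow)
      have "n * (C * n powr (2 - r)) / n\<^sup>2 = C * (n powr (2 - r) / n powr 1)"
        using n by (simp add: power2_eq_square)
      also have "\<dots> = C * 2 powr (real j * (1 - r))"
        unfolding powr_diff[symmetric] n(2) by (simp add: powr_powr algebra_simps)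
      finally show ?thesis by (simp add: n_def powr_power)
    qed
    finally show ?thesis .
  qed
  have "summable (\<lambda>j. C * (2 powr (1 - r)) ^ j)"
    using r by (intro summable_mult summable_geometric) (auto intro: powr_less_one)
  then have "summable (\<lambda>j. measure M (A j))"
    by (rule summable_comparison_test[rotated]) (use PA in auto)
  then have "AE \<omega> in M. eventually (\<lambda>j. \<omega> \<in> space M - A j) sequentially"
    by (intro borel_cantelli_AE1) (auto simp: emeasure_eq_measure)
  then show ?thesis
    by eventually_elim (auto simp: A_def S_def not_le elim!: eventually_mono)
qed

lemma powr_le_one_plus_powr:
  assumes "0 \<le> (a::real)" "0 \<le> s" "s \<le> q"
  shows "a powr s \<le> 1 + a powr q"
proof (cases "a \<le> 1")
  case True
  then have "a powr s \<le> 1" using assms by (intro powr_le1) auto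
  then show ?thesis by (simp add: add_increasing2)
next
  case False
  then show ?thesis using assms by (simp add: add_increasing powr_mono)
qed

lemma min_le_one_plus_powr:
  assumes "0 \<le> (y::real)" "1 \<le> r"
  shows "min y c \<le> 1 + y powr r"
  using powr_le_one_plus_powr[of y 1 r] assms by (simp add: min_le_iff_disj)

lemma square_min_le_powr_mult:
  assumes "0 \<le> (y::real)" "0 < c" "0 < r" "r \<le> 2"
  shows "(min y c)\<^sup>2 \<le> y powr r * c powr (2 - r)"
proof (cases "min y c = 0")
  case True then show ?thesis by simp
next
  case False
  then have pos: "0 < min y c" using assms by simp
  have "(min y c)\<^sup>2 = min y c powr r * min y c powr (2 - r)"
    using pos by (simp add: powr_numeral powr_add[symmetric])
  also have "\<dots> \<le> y powr r * c powr (2 - r)"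
    by (rule mult_mono; (rule powr_mono2)?) (use assms pos in auto)
  finally show ?thesis .
qed

lemma integral_square_truncation_diff_le:
  fixes Y m :: "'w \<Rightarrow> real"
  assumes prob: "prob_space M"
    and [measurable]: "Y \<in> borel_measurable M" "m \<in> borel_measurable M"
    and Y_nonneg: "\<And>\<omega>. 0 \<le> Y \<omega>" and m_bound: "\<And>\<omega>. 0 \<le> m \<omega> \<and> m \<omega> \<le> B"
    and r: "0 < r" "r \<le> 2" and c: "1 \<le> c" and K: "0 \<le> K"
    and moment: "(\<integral>\<^sup>+\<omega>. ennreal (Y \<omega> powr r) \<partial>M) \<le> ennreal K"
  shows "(\<integral>\<omega>. (min (Y \<omega>) c - m \<omega>)\<^sup>2 \<partial>M) \<le> (2 * K + 2 * B\<^sup>2) * c powr (2 - r)"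
proof -
  interpret prob_space M by (rule prob)
  have c_powr: "1 \<le> c powr (2 - r)" using c r by (intro ge_one_powr_ge_zero) auto
  have int: "integrable M (\<lambda>\<omega>. (min (Y \<omega>) c)\<^sup>2)"
    by (rule integrable_const_bound[where B="c\<^sup>2"])
       (use c Y_nonneg in \<open>auto intro!: AE_I2 square_le_square_of_abs_le\<close>)
  have "ennreal (\<integral>\<omega>. (min (Y \<omega>) c)\<^sup>2 \<partial>M) = (\<integral>\<^sup>+\<omega>. ennreal ((min (Y \<omega>) c)\<^sup>2) \<partial>M)"
    by (rule nn_integral_eq_integral[symmetric]) (use int in auto)
  also have "\<dots> \<le> (\<integral>\<^sup>+\<omega>. ennreal (Y \<omega> powr r) * ennreal (c powr (2 - r)) \<partial>M)"
    using square_min_le_powr_mult[OF Y_nonneg _ r] c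
    by (intro nn_integral_mono) (simp add: ennreal_mult[symmetric] ennreal_leI)
  also have "\<dots> = (\<integral>\<^sup>+\<omega>. ennreal (Y \<omega> powr r) \<partial>M) * ennreal (c powr (2 - r))"
    by (rule nn_integral_multc) auto
  also have "\<dots> \<le> ennreal (K * c powr (2 - r))"
    using mult_right_mono[OF moment] K by (simp add: ennreal_mult)
  finally have trunc: "(\<integral>\<omega>. (min (Y \<omega>) c)\<^sup>2 \<partial>M) \<le> K * c powr (2 - r)"
    using K by (subst (asm) ennreal_le_iff) auto
  have pointwise: "(min (Y \<omega>) c - m \<omega>)\<^sup>2 \<le> 2 * (min (Y \<omega>) c)\<^sup>2 + 2 * B\<^sup>2" for \<omega>
  proof -
    have "(m \<omega>)\<^sup>2 \<le> B\<^sup>2" by (rule power_mono) (use m_bound in auto)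
    moreover have "(min (Y \<omega>) c - m \<omega>)\<^sup>2 \<le> 2 * (min (Y \<omega>) c)\<^sup>2 + 2 * (m \<omega>)\<^sup>2"
      using zero_le_square[of "min (Y \<omega>) c + m \<omega>"] by (simp add: power2_eq_square algebra_simps)
    ultimately show ?thesis by linarith
  qed
  have "integrable M (\<lambda>\<omega>. (min (Y \<omega>) c - m \<omega>)\<^sup>2)"
  proof (rule integrable_const_bound[where B="2 * c\<^sup>2 + 2 * B\<^sup>2"])
    show "AE \<omega> in M. norm ((min (Y \<omega>) c - m \<omega>)\<^sup>2) \<le> 2 * c\<^sup>2 + 2 * B\<^sup>2"
    proof (rule AE_I2)
      fix \<omega>
      have "(min (Y \<omega>) c)\<^sup>2 \<le> c\<^sup>2"
        by (rule square_le_square_of_abs_le) (use c Y_nonneg in auto)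
      then show "norm ((min (Y \<omega>) c - m \<omega>)\<^sup>2) \<le> 2 * c\<^sup>2 + 2 * B\<^sup>2"
        using pointwise[of \<omega>] by simp
    qed
  qed auto
  then have "(\<integral>\<omega>. (min (Y \<omega>) c - m \<omega>)\<^sup>2 \<partial>M) \<le> (\<integral>\<omega>. 2 * (min (Y \<omega>) c)\<^sup>2 + 2 * B\<^sup>2 \<partial>M)"
    by (rule integral_mono) (use int pointwise in auto)
  also have "\<dots> = 2 * (\<integral>\<omega>. (min (Y \<omega>) c)\<^sup>2 \<partial>M) + 2 * B\<^sup>2"
    using int by (simp add: prob_space)
  also have "\<dots> \<le> 2 * (K * c powr (2 - r)) + 2 * B\<^sup>2 * c powr (2 - r)"
    using trunc c_powr by (intro add_mono) (auto simp: mult_le_cancel_left1)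
  finally show ?thesis by (simp add: algebra_simps)
qed

text \<open>Truncate \<open>Y\<^sub>t\<close> at \<open>t + 1\<close> (by the first Borel--Cantelli lemma this changes only
  finitely many terms) and compare the truncations with their conditional expectations,
  which are at most \<open>1 + K\<close>.\<close>
lemma AE_sums_linearly_bounded_of_cond_moment_le:
  fixes Y :: "nat \<Rightarrow> 'w \<Rightarrow> real"
  assumes prob: "prob_space M"
    and subalg: "\<And>t. subalgebra M (G t)"
    and mono: "\<And>t. sets (G t) \<subseteq> sets (G (Suc t))"
    and Y_meas: "\<And>t. Y t \<in> borel_measurable (G (Suc t))"
    and Y_nonneg: "\<And>t \<omega>. 0 \<le> Y t \<omega>"
    and r: "1 < r" "r \<le> 2" and K: "0 \<le> K"
    and cond_moment: "\<And>t. AE \<omega> in M. nn_cond_exp M (G t) (\<lambda>\<omega>. ennreal (Y t \<omega> powr r)) \<omega> \<le> ennreal K"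
  shows "AE \<omega> in M. sums_linearly_bounded (\<lambda>t. Y t \<omega>)"
proof -
  interpret prob_space M by (rule prob)
  have [measurable]: "Y t \<in> borel_measurable M" for t using measurable_from_subalg[OF subalg Y_meas] .
  have moment: "(\<integral>\<^sup>+\<omega>. ennreal (Y t \<omega> powr r) \<partial>M) \<le> ennreal K" for t
    by (rule nn_integral_le_of_nn_cond_exp_le[OF prob subalg _ cond_moment]) simp
  define Yc where "Yc t \<omega> = min (Y t \<omega>) (real t + 1)" for t \<omega>
  define m where "m t \<omega> = max 0 (min (1 + K) (real_cond_exp M (G t) (Yc t) \<omega>))" for t \<omega>
  have Yc_meas: "Yc t \<in> borel_measurable (G (Suc t))" for t
    unfolding Yc_def using Y_meas[of t] by measurable
  have [measurable]: "Yc t \<in> borel_measurable M" for t using measurable_from_subalg[OF subalg Yc_meas] .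
  have m_meas: "m t \<in> borel_measurable (G t)" for t unfolding m_def by measurable
  have [measurable]: "m t \<in> borel_measurable M" for t using measurable_from_subalg[OF subalg m_meas] .
  have m_bound: "0 \<le> m t \<omega> \<and> m t \<omega> \<le> 1 + K" for t \<omega> unfolding m_def using K by auto
  have m_eq: "AE \<omega> in M. m t \<omega> = real_cond_exp M (G t) (Yc t) \<omega>" for t
  proof -
    have "AE \<omega> in M. 0 \<le> real_cond_exp M (G t) (Yc t) \<omega>"
      by (rule sigma_finite_subalgebra.real_cond_exp_pos[OF prob_space_sigma_finite_subalgebra[OF prob subalg]])
         (auto simp: Yc_def Y_nonneg)
    moreover have "AE \<omega> in M. real_cond_exp M (G t) (Yc t) \<omega> \<le> 1 + K"
      by (rule real_cond_exp_le_of_cond_moment_le[OF prob subalg _ _ _ _ cond_moment K])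
         (use r(1) in \<open>auto simp: Yc_def intro!: min_le_one_plus_powr Y_nonneg\<close>)
    ultimately show ?thesis by eventually_elim (auto simp: m_def)
  qed
  have "AE \<omega> in M. eventually (\<lambda>j. \<bar>\<Sum>t<2 ^ j. Yc t \<omega> - m t \<omega>\<bar> < 2 ^ j) sequentially"
  proof (rule AE_eventually_dyadic_martingale_sum_less[of M G Yc "\<lambda>t. real t + 2 + K" m,
        OF prob subalg mono Yc_meas _ m_meas _ m_eq r])
    show "\<bar>Yc t \<omega>\<bar> \<le> real t + 2 + K" "\<bar>m t \<omega>\<bar> \<le> real t + 2 + K" for t \<omega>
      using m_bound[of t \<omega>] K Y_nonneg[of t \<omega>] by (auto simp: Yc_def)
    show "(\<integral>\<omega>. (Yc t \<omega> - m t \<omega>)\<^sup>2 \<partial>M) \<le> (2 * K + 2 * (1 + K)\<^sup>2) * (real t + 1) powr (2 - r)"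
      for t unfolding Yc_def
      by (rule integral_square_truncation_diff_le[OF prob _ _ _ m_bound _ _ _ K moment])
         (use r Y_nonneg in auto)
  qed (use K in auto)
  moreover have "AE \<omega> in M. eventually (\<lambda>t. Y t \<omega> \<le> real t + 1) sequentially"
    by (rule AE_eventually_le_Suc_of_bounded_moments[OF prob _ r(1) K moment]) simp
  ultimately show ?thesis
  proof eventually_elim
    case (elim \<omega>)
    show ?case
      by (rule sums_linearly_bounded_of_dyadic_blocks[of _ "\<lambda>t. m t \<omega>" "1 + K"])
         (use elim Y_nonneg m_bound K in \<open>auto simp: Yc_def\<close>)
  qed
qed

lemma nn_cond_exp_powr_le_on_level_set:
  fixes Z :: "'w \<Rightarrow> real" and V :: "'w \<Rightarrow> ennreal"
  assumes prob: "prob_space M" and subalg: "subalgebra M F"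
    and [measurable]: "Z \<in> borel_measurable M" "V \<in> borel_measurable M"
    and Z_le: "\<And>\<omega>. ennreal (Z \<omega> powr r) \<le> 1 + V \<omega>"
  shows "AE \<omega> in M. nn_cond_exp M F (\<lambda>\<omega>. ennreal
      ((Z \<omega> * (if nn_cond_exp M F V \<omega> \<le> of_nat k then 1 else 0)) powr r)) \<omega> \<le> ennreal (1 + real k)"
proof -
  interpret sigma_finite_subalgebra M F
    by (rule prob_space_sigma_finite_subalgebra[OF prob subalg])
  define I where "I \<omega> = (if nn_cond_exp M F V \<omega> \<le> of_nat k then 1 else 0 :: real)" for \<omega>
  have [measurable]: "I \<in> borel_measurable F" unfolding I_def by measurable
  have [measurable]: "I \<in> borel_measurable M" by (rule measurable_from_subalg[OF subalg]) simp
  have mono: "AE \<omega> in M. nn_cond_exp M F (\<lambda>\<omega>. ennreal ((Z \<omega> * I \<omega>) powr r)) \<omega>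
      \<le> nn_cond_exp M F (\<lambda>\<omega>. ennreal (I \<omega>) * (1 + V \<omega>)) \<omega>"
    by (rule nn_cond_exp_mono) (auto simp: I_def Z_le)
  have pull_out: "AE \<omega> in M. ennreal (I \<omega>) * nn_cond_exp M F (\<lambda>\<omega>. 1 + V \<omega>) \<omega>
      = nn_cond_exp M F (\<lambda>\<omega>. ennreal (I \<omega>) * (1 + V \<omega>)) \<omega>"
    by (rule nn_cond_exp_prod) auto
  have sum: "AE \<omega> in M. nn_cond_exp M F (\<lambda>\<omega>. 1) \<omega> + nn_cond_exp M F V \<omega>
      = nn_cond_exp M F (\<lambda>\<omega>. 1 + V \<omega>) \<omega>"
    by (rule nn_cond_exp_sum) auto
  have one: "AE \<omega> in M. 1 = nn_cond_exp M F (\<lambda>\<omega>. 1) \<omega>"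
    using nn_cond_exp_F_meas[of "\<lambda>\<omega>. 1"] by simp
  show ?thesis
    using mono pull_out sum one unfolding I_def[symmetric]
  proof eventually_elim
    case (elim \<omega>)
    have "ennreal (I \<omega>) * nn_cond_exp M F (\<lambda>\<omega>. 1 + V \<omega>) \<omega> \<le> ennreal (1 + real k)"
    proof (cases "nn_cond_exp M F V \<omega> \<le> of_nat k")
      case True
      have "nn_cond_exp M F (\<lambda>\<omega>. 1 + V \<omega>) \<omega> = 1 + nn_cond_exp M F V \<omega>"
        using elim(3,4) by simp
      also have "\<dots> \<le> 1 + of_nat k" using True by (rule add_left_mono)
      finally show ?thesis
        using True by (simp add: I_def ennreal_plus ennreal_of_nat_eq_real_of_nat[symmetric])
    qed (simp add: I_def)
    then show ?case using elim(1,2) by simp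
  qed
qed

text \<open>Localisation: on the event \<open>{sup\<^sub>t E[V\<^sub>t | G\<^sub>t] \<le> k}\<close> the truncated sequence
  \<open>Z\<^sub>t 1{E[V\<^sub>t | G\<^sub>t] \<le> k}\<close> coincides with \<open>Z\<^sub>t\<close> and has conditional moments at most \<open>1 + k\<close>;
  these events exhaust the space up to a null set.\<close>
lemma AE_sums_linearly_bounded_of_SUP_cond_moment_finite:
  fixes Z :: "nat \<Rightarrow> 'w \<Rightarrow> real" and V :: "nat \<Rightarrow> 'w \<Rightarrow> ennreal"
  assumes prob: "prob_space M"
    and subalg: "\<And>t. subalgebra M (G t)"
    and mono: "\<And>t. sets (G t) \<subseteq> sets (G (Suc t))"
    and Z_meas: "\<And>t. Z t \<in> borel_measurable (G (Suc t))"
    and Z_nonneg: "\<And>t \<omega>. 0 \<le> Z t \<omega>"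
    and r: "1 < r" "r \<le> 2"
    and V_meas: "\<And>t. V t \<in> borel_measurable M"
    and Z_le: "\<And>t \<omega>. ennreal (Z t \<omega> powr r) \<le> 1 + V t \<omega>"
    and SUP_finite: "AE \<omega> in M. (SUP t. nn_cond_exp M (G t) (V t) \<omega>) < \<infinity>"
  shows "AE \<omega> in M. sums_linearly_bounded (\<lambda>t. Z t \<omega>)"
proof -
  define I where "I k t \<omega> = (if nn_cond_exp M (G t) (V t) \<omega> \<le> of_nat k then 1 else 0 :: real)"
    for k t \<omega>
  have "I k t \<in> borel_measurable (G t)" for k t unfolding I_def by measurable
  then have I_meas: "I k t \<in> borel_measurable (G (Suc t))" for k t
    by (rule measurable_filtration_mono[of M G, OF subalg mono, rotated]) simp
  have "AE \<omega> in M. sums_linearly_bounded (\<lambda>t. Z t \<omega> * I k t \<omega>)" for k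
  proof (rule AE_sums_linearly_bounded_of_cond_moment_le[of M G "\<lambda>t \<omega>. Z t \<omega> * I k t \<omega>" r
        "1 + real k", OF prob subalg mono _ _ r])
    show "(\<lambda>\<omega>. Z t \<omega> * I k t \<omega>) \<in> borel_measurable (G (Suc t))" for t
      using Z_meas[of t] I_meas[of k t] by measurable
    show "AE \<omega> in M. nn_cond_exp M (G t) (\<lambda>\<omega>. ennreal ((Z t \<omega> * I k t \<omega>) powr r)) \<omega>
        \<le> ennreal (1 + real k)" for t
      unfolding I_def
      by (rule nn_cond_exp_powr_le_on_level_set[OF prob subalg _ V_meas Z_le])
         (rule measurable_from_subalg[OF subalg Z_meas])
  qed (auto simp: I_def Z_nonneg)
  then have "AE \<omega> in M. \<forall>k. sums_linearly_bounded (\<lambda>t. Z t \<omega> * I k t \<omega>)"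
    by (subst AE_all_countable) auto
  then show ?thesis using SUP_finite
  proof eventually_elim
    case (elim \<omega>)
    obtain x where x: "(SUP t. nn_cond_exp M (G t) (V t) \<omega>) = ennreal x"
      using elim(2) by (cases "(SUP t. nn_cond_exp M (G t) (V t) \<omega>)") auto
    obtain k :: nat where "x \<le> real k" using real_arch_simple by blast
    then have "(SUP t. nn_cond_exp M (G t) (V t) \<omega>) \<le> of_nat k"
      using x by (simp add: ennreal_of_nat_eq_real_of_nat)
    then have "nn_cond_exp M (G t) (V t) \<omega> \<le> of_nat k" for t
      by (rule order_trans[rotated]) (rule SUP_upper, simp)
    then have "(\<lambda>t. Z t \<omega> * I k t \<omega>) = (\<lambda>t. Z t \<omega>)" by (simp add: I_def)
    then show ?case using elim(1) by metis
  qed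
qed

lemma powr_add_le:
  fixes a b p :: real
  assumes "0 \<le> a" "0 \<le> b" "0 < p"
  shows "(a + b) powr p \<le> 2 powr p * (a powr p + b powr p)"
proof -
  have "(a + b) powr p \<le> (2 * max a b) powr p" by (intro powr_mono2) (use assms in auto)
  also have "\<dots> = 2 powr p * max a b powr p" using assms by (simp add: powr_mult)
  also have "max a b powr p \<le> a powr p + b powr p" by (simp add: max_def)
  finally show ?thesis by simp
qed

text \<open>The contraction \<open>\<rho> n\<close> absorbs \<open>e\<close> unless \<open>e > (1 - \<rho>) n / 2\<close>, in which case
  \<open>e\<close> dominates \<open>n\<close>.\<close>
lemma powr_contraction_step_le:
  fixes n e \<rho> p :: real
  assumes "0 \<le> n" "0 \<le> e" "0 < \<rho>" "\<rho> < 1" "1 \<le> p"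
  shows "(\<rho> * n + e) powr p
    \<le> ((1 + \<rho>) / 2) * n powr p + (2 * \<rho> / (1 - \<rho>) + 1) powr p * e powr p"
proof -
  define \<delta> where "\<delta> = (1 - \<rho>) / 2"
  define l where "l = (1 + \<rho>) / 2"
  have \<delta>: "0 < \<delta>" "\<rho> + \<delta> = l" "0 < l" "l \<le> 1"
    using assms unfolding \<delta>_def l_def by (auto simp: field_simps)
  have c: "2 * \<rho> / (1 - \<rho>) = \<rho> / \<delta>" unfolding \<delta>_def by simp
  show ?thesis
  proof (cases "e \<le> \<delta> * n")
    case True
    then have "\<rho> * n + e \<le> l * n" using \<delta>(2) by (metis add_left_mono distrib_right)
    then have "(\<rho> * n + e) powr p \<le> (l * n) powr p" by (intro powr_mono2) (use assms in auto)
    also have "\<dots> = l powr p * n powr p" using \<delta> assms by (simp add: powr_mult)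
    also have "l powr p \<le> l powr 1" by (rule powr_mono') (use \<delta> assms in auto)
    then have "l powr p * n powr p \<le> l * n powr p" using \<delta> by (intro mult_right_mono) auto
    also have "\<dots> \<le> l * n powr p + (\<rho> / \<delta> + 1) powr p * e powr p"
      by (intro add_increasing2) auto
    finally show ?thesis unfolding l_def c .
  next
    case False
    have "\<rho> * n = (\<rho> / \<delta>) * (\<delta> * n)" using \<delta> by simp
    also have "\<dots> \<le> (\<rho> / \<delta>) * e" using False \<delta> assms by (intro mult_left_mono) auto
    finally have "\<rho> * n + e \<le> (\<rho> / \<delta> + 1) * e" by (simp add: algebra_simps)
    then have "(\<rho> * n + e) powr p \<le> ((\<rho> / \<delta> + 1) * e) powr p"
      by (intro powr_mono2) (use assms in auto)
    also have "\<dots> = (\<rho> / \<delta> + 1) powr p * e powr p" using \<delta> assms by (simp add: powr_mult)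
    also have "\<dots> \<le> ((1 + \<rho>) / 2) * n powr p + (\<rho> / \<delta> + 1) powr p * e powr p"
      by (intro add_increasing) (use assms in auto)
    finally show ?thesis unfolding c .
  qed
qed

lemma sums_linearly_bounded_powr_of_recursion:
  fixes n e :: "nat \<Rightarrow> real"
  assumes \<rho>: "0 < \<rho>" "\<rho> < 1" and p: "1 \<le> p"
    and n_nonneg: "\<And>t. 0 \<le> n t" and e_nonneg: "\<And>t. 0 \<le> e t"
    and step: "\<And>t. n (Suc t) \<le> \<rho> * n t + e t"
    and e: "sums_linearly_bounded (\<lambda>t. e t powr p)"
  shows "sums_linearly_bounded (\<lambda>t. n t powr p)"
proof -
  obtain C where C: "\<And>T. (\<Sum>t<T. e t powr p) \<le> C * (real T + 1)"
    using e unfolding sums_linearly_bounded_def by blast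
  define l where "l = (1 + \<rho>) / 2"
  define c where "c = (2 * \<rho> / (1 - \<rho>) + 1) powr p"
  have l: "l < 1" unfolding l_def using \<rho> by auto
  have c: "0 \<le> c" unfolding c_def by simp
  have C0: "0 \<le> C" using C[of 0] by simp
  have n_step: "n (Suc t) powr p \<le> l * n t powr p + c * e t powr p" for t
  proof -
    have "n (Suc t) powr p \<le> (\<rho> * n t + e t) powr p"
      by (intro powr_mono2) (use p n_nonneg step in auto)
    also have "\<dots> \<le> l * n t powr p + c * e t powr p"
      unfolding l_def c_def by (rule powr_contraction_step_le) (use n_nonneg e_nonneg \<rho> p in auto)
    finally show ?thesis .
  qed
  have "(\<Sum>t<T. n t powr p) \<le> (n 0 powr p + c * C) / (1 - l) * (real T + 1)" for T
  proof -
    have "(\<Sum>t<T. n t powr p) \<le> (\<Sum>t<Suc T. n t powr p)" by simp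
    also have "\<dots> = n 0 powr p + (\<Sum>t<T. n (Suc t) powr p)" by (rule sum.lessThan_Suc_shift)
    also have "(\<Sum>t<T. n (Suc t) powr p) \<le> (\<Sum>t<T. l * n t powr p + c * e t powr p)"
      by (intro sum_mono n_step)
    also have "\<dots> = l * (\<Sum>t<T. n t powr p) + c * (\<Sum>t<T. e t powr p)"
      by (simp add: sum.distrib sum_distrib_left)
    also have "c * (\<Sum>t<T. e t powr p) \<le> c * (C * (real T + 1))"
      by (rule mult_left_mono[OF C c])
    finally have "(1 - l) * (\<Sum>t<T. n t powr p) \<le> n 0 powr p + c * C * (real T + 1)"
      by (simp add: algebra_simps)
    also have "\<dots> \<le> (n 0 powr p + c * C) * (real T + 1)"
      using c C0 by (simp add: algebra_simps)
    finally show ?thesis using l by (simp add: field_simps)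
  qed
  then show ?thesis unfolding sums_linearly_bounded_def by blast
qed

lemma norm_transpose: "norm (transpose (A::real^'n^'m)) = norm A"
proof -
  have "transpose A \<bullet> transpose A = (\<Sum>i\<in>UNIV. \<Sum>j\<in>UNIV. A$j$i * A$j$i)"
    by (simp add: inner_vec_def transpose_def)
  also have "\<dots> = (\<Sum>j\<in>UNIV. \<Sum>i\<in>UNIV. A$j$i * A$j$i)" by (rule sum.swap)
  also have "\<dots> = A \<bullet> A" by (simp add: inner_vec_def)
  finally show ?thesis by (simp add: norm_eq_sqrt_inner)
qed

lemma is_norm_sum:
  assumes N: "is_norm N" and "finite S"
  shows "N (sum f S) \<le> (\<Sum>i\<in>S. N (f i))"
  using assms(2)
proof (induction S rule: finite_induct)
  case empty
  have "N 0 = 0" using N unfolding is_norm_def by blast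
  then show ?case by simp
next
  case (insert x F)
  have "N (f x + sum f F) \<le> N (f x) + N (sum f F)" using N unfolding is_norm_def by blast
  then show ?case using insert by simp
qed

lemma is_norm_le_mult_norm:
  fixes N :: "'a::euclidean_space \<Rightarrow> real"
  assumes N: "is_norm N"
  obtains b where "0 < b" "\<And>v. N v \<le> b * norm v"
proof
  have N_nonneg: "0 \<le> N v" for v using N unfolding is_norm_def by blast
  show "0 < (\<Sum>i\<in>Basis. N i) + 1" using N_nonneg by (simp add: add_nonneg_pos sum_nonneg)
  fix v
  have "N v = N (\<Sum>i\<in>Basis. (v \<bullet> i) *\<^sub>R i)" by (simp add: euclidean_representation)
  also have "\<dots> \<le> (\<Sum>i\<in>Basis. N ((v \<bullet> i) *\<^sub>R i))" by (rule is_norm_sum[OF N]) simp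
  also have "\<dots> = (\<Sum>i\<in>Basis. \<bar>v \<bullet> i\<bar> * N i)" using N unfolding is_norm_def by simp
  also have "\<dots> \<le> (\<Sum>i\<in>Basis. norm v * N i)"
    by (intro sum_mono mult_right_mono Basis_le_norm N_nonneg)
  also have "\<dots> \<le> ((\<Sum>i\<in>Basis. N i) + 1) * norm v" by (simp add: sum_distrib_left algebra_simps)
  finally show "N v \<le> ((\<Sum>i\<in>Basis. N i) + 1) * norm v" .
qed

text \<open>\<open>N\<close> is Lipschitz, hence attains a positive minimum on the unit sphere.\<close>
lemma is_norm_equiv:
  fixes N :: "'a::euclidean_space \<Rightarrow> real"
  assumes N: "is_norm N"
  shows "\<exists>a b. 0 < a \<and> 0 < b \<and> (\<forall>v. norm v \<le> a * N v) \<and> (\<forall>v. N v \<le> b * norm v)"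
proof -
  have Nnn: "0 \<le> N v" for v using N unfolding is_norm_def by blast
  have Nz: "N v = 0 \<longleftrightarrow> v = 0" for v using N unfolding is_norm_def by blast
  have Nh: "N (c *\<^sub>R v) = \<bar>c\<bar> * N v" for c v using N unfolding is_norm_def by blast
  have Nt: "N (v + w) \<le> N v + N w" for v w using N unfolding is_norm_def by blast
  obtain b where b0: "0 < b" and up: "\<And>v. N v \<le> b * norm v" using is_norm_le_mult_norm[OF N] by blast
  have lip: "dist (N x) (N y) \<le> b * dist x y" for x y
  proof -
    have "N x \<le> N (x - y) + N y" using Nt[of "x - y" y] by simp
    moreover have "N y \<le> N (y - x) + N x" using Nt[of "y - x" x] by simp
    moreover have "N (y - x) = N (x - y)" using Nh[of "-1" "x - y"] by simp
    ultimately have "\<bar>N x - N y\<bar> \<le> N (x - y)" by linarith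
    then show ?thesis using up[of "x - y"] by (simp add: dist_real_def dist_norm)
  qed
  have cont: "continuous_on (sphere 0 1) N"
    by (rule lipschitz_on_continuous_on[OF lipschitz_onI[OF lip]]) (use b0 in auto)
  obtain v0 where v0: "v0 \<in> sphere 0 1" "\<And>v. v \<in> sphere 0 1 \<Longrightarrow> N v0 \<le> N v"
    using continuous_attains_inf[OF compact_sphere _ cont] by (auto simp: sphere_eq_empty)
  have m0: "0 < N v0" using v0(1) Nz[of v0] Nnn[of v0] by auto
  have lo: "norm v \<le> (1 / N v0) * N v" for v
  proof (cases "v = 0")
    case True then show ?thesis using Nnn[of 0] m0 by simp
  next
    case False
    then have "(1 / norm v) *\<^sub>R v \<in> sphere 0 1" by simp
    then have "N v0 \<le> N ((1 / norm v) *\<^sub>R v)" by (rule v0(2))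
    also have "\<dots> = N v / norm v" by (simp add: Nh)
    finally have "N v0 * norm v \<le> N v" using False by (simp add: field_simps)
    then show ?thesis using m0 by (simp add: field_simps)
  qed
  show ?thesis using m0 b0 lo up by (intro exI[of _ "1 / N v0"] exI[of _ b]) auto
qed

lemma sums_linearly_bounded_powr_of_perturbed_contraction:
  fixes x e :: "nat \<Rightarrow> 'a::euclidean_space" and N :: "'a \<Rightarrow> real"
  assumes N: "is_norm N" and \<rho>: "0 < \<rho>" "\<rho> < 1" and p: "1 \<le> p"
    and contraction: "\<And>t. N (x (Suc t) - e t) \<le> \<rho> * N (x t)"
    and e: "sums_linearly_bounded (\<lambda>t. norm (e t) powr p)"
  shows "sums_linearly_bounded (\<lambda>t. norm (x t) powr p)"
proof -
  obtain a b where ab: "0 < a" "0 < b" "\<And>v. norm v \<le> a * N v" "\<And>v. N v \<le> b * norm v"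
    using is_norm_equiv[OF N] by blast
  have N_nonneg: "0 \<le> N v" for v using N unfolding is_norm_def by blast
  have step: "N (x (Suc t)) \<le> \<rho> * N (x t) + b * norm (e t)" for t
  proof -
    have "N (x (Suc t)) \<le> N (x (Suc t) - e t) + N (e t)"
      using N unfolding is_norm_def by (metis diff_add_cancel)
    then show ?thesis using contraction[of t] ab(4)[of "e t"] by linarith
  qed
  have "(b * norm (e t)) powr p \<le> 0 + b powr p * norm (e t) powr p" for t
    using ab(2) by (simp add: powr_mult)
  then have "sums_linearly_bounded (\<lambda>t. (b * norm (e t)) powr p)"
    by (rule sums_linearly_bounded_affine[OF _ _ e]) simp
  then have "sums_linearly_bounded (\<lambda>t. N (x t) powr p)"
    using sums_linearly_bounded_powr_of_recursion[OF \<rho> p, of "\<lambda>t. N (x t)" "\<lambda>t. b * norm (e t)"]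
      N_nonneg step ab(2) by simp
  moreover have "norm (x t) powr p \<le> 0 + a powr p * N (x t) powr p" for t
  proof -
    have "norm (x t) powr p \<le> (a * N (x t)) powr p" by (intro powr_mono2 ab(3)) (use p in auto)
    also have "\<dots> = a powr p * N (x t) powr p" using ab N_nonneg by (simp add: powr_mult)
    finally show ?thesis by simp
  qed
  ultimately show ?thesis by (rule sums_linearly_bounded_affine[rotated 2]) auto
qed

lemma AE_sums_linearly_bounded_noise_powr:
  fixes w :: "nat \<Rightarrow> 'w \<Rightarrow> 'a::euclidean_space"
  assumes prob: "prob_space M"
    and subalg: "\<And>t. subalgebra M (F t)"
    and mono: "\<And>t. sets (F t) \<subseteq> sets (F (Suc t))"
    and w_meas: "\<And>t. w (Suc t) \<in> borel_measurable (F (Suc t))"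
    and w_moment: "AE \<omega> in M. (SUP t. nn_cond_exp M (F t)
                     (\<lambda>\<omega>. ennreal (norm (w (Suc t) \<omega>) powr q)) \<omega>) < \<infinity>"
    and p: "0 < p" "p < q"
  shows "AE \<omega> in M. sums_linearly_bounded (\<lambda>t. norm (w (Suc t) \<omega>) powr p)"
proof -
  define r where "r = min 2 (q / p)"
  have r: "1 < r" "r \<le> 2" "p * r \<le> q"
    unfolding r_def using p by (auto simp: field_simps min_def)
  have [measurable]: "w (Suc t) \<in> borel_measurable M" for t
    using measurable_from_subalg[OF subalg w_meas] .
  show ?thesis
  proof (rule AE_sums_linearly_bounded_of_SUP_cond_moment_finite[OF prob subalg mono _ _ r(1,2) _ _ w_moment])
    show "(\<lambda>\<omega>. norm (w (Suc t) \<omega>) powr p) \<in> borel_measurable (F (Suc t))" for t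
      using w_meas[of t] by measurable
    show "ennreal ((norm (w (Suc t) \<omega>) powr p) powr r) \<le> 1 + ennreal (norm (w (Suc t) \<omega>) powr q)"
      for t \<omega>
    proof -
      have "(norm (w (Suc t) \<omega>) powr p) powr r \<le> 1 + norm (w (Suc t) \<omega>) powr q"
        using powr_le_one_plus_powr[of "norm (w (Suc t) \<omega>)" "p * r" q] p r by (simp add: powr_powr)
      then have "ennreal ((norm (w (Suc t) \<omega>) powr p) powr r)
          \<le> ennreal (1 + norm (w (Suc t) \<omega>) powr q)" by (rule ennreal_leI)
      then show ?thesis by (simp add: ennreal_plus)
    qed
  qed auto
qed

lemma norm_state_input_le:
  fixes pol :: "'a::real_normed_vector \<Rightarrow> 'b::real_normed_vector"
  assumes pol_lip: "\<And>a b. norm (pol a - pol b) \<le> L * norm (a - b)" and e: "norm e \<le> E"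
  shows "norm (x, pol x + e) \<le> (norm (pol 0) + \<bar>E\<bar>) + (1 + \<bar>L\<bar>) * norm x"
proof -
  have "norm (pol x) \<le> norm (pol 0) + norm (pol x - pol 0)" by (rule norm_triangle_sub)
  also have "norm (pol x - pol 0) \<le> \<bar>L\<bar> * norm x"
    using order_trans[OF pol_lip[of x 0] mult_right_mono[OF abs_ge_self norm_ge_zero]] by simp
  finally have "norm (pol x + e) \<le> norm (pol 0) + \<bar>L\<bar> * norm x + \<bar>E\<bar>"
    using norm_triangle_ineq[of "pol x" e] e by linarith
  then show ?thesis using norm_Pair_le[of x "pol x + e"] by (simp add: algebra_simps)
qed

lemma AE_sums_linearly_bounded_state_input_powr:
  fixes M :: "'w measure" and F :: "nat \<Rightarrow> 'w measure"
    and h :: "'p \<Rightarrow> 'a::euclidean_space \<Rightarrow> 'b::euclidean_space \<Rightarrow> 'a"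
    and x w :: "nat \<Rightarrow> 'w \<Rightarrow> 'a" and u eps :: "nat \<Rightarrow> 'w \<Rightarrow> 'b"
  assumes prob: "prob_space M"
    and subalg: "\<And>t. subalgebra M (F t)"
    and mono: "\<And>t. sets (F t) \<subseteq> sets (F (Suc t))"
    and dyn: "\<And>t \<omega>. \<omega> \<in> space M \<Longrightarrow> x (Suc t) \<omega> = h ths (x t \<omega>) (u t \<omega>) + w (Suc t) \<omega>"
    and inp: "\<And>t \<omega>. \<omega> \<in> space M \<Longrightarrow> u t \<omega> = pol (x t \<omega>) + eps t \<omega>"
    and w_meas: "\<And>t. w (Suc t) \<in> borel_measurable (F (Suc t))"
    and w_moment: "AE \<omega> in M. (SUP t. nn_cond_exp M (F t)
                     (\<lambda>\<omega>. ennreal (norm (w (Suc t) \<omega>) powr q)) \<omega>) < \<infinity>"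
    and pol_lip: "\<And>a b. norm (pol a - pol b) \<le> L * norm (a - b)"
    and eps_bound: "\<And>t \<omega>. \<omega> \<in> space M \<Longrightarrow> norm (eps t \<omega>) \<le> E"
    and stable: "\<exists>\<rho> N. 0 < \<rho> \<and> \<rho> < 1 \<and> is_norm N \<and>
                  (\<forall>t. \<forall>\<omega>\<in>space M. N (h ths (x t \<omega>) (u t \<omega>)) \<le> \<rho> * N (x t \<omega>))"
    and p: "1 \<le> p" "p < q"
  shows "AE \<omega> in M. sums_linearly_bounded (\<lambda>t. norm (x t \<omega>, u t \<omega>) powr p)"
proof -
  obtain \<rho> N where \<rho>: "0 < \<rho>" "\<rho> < 1" and N: "is_norm N"
    and contraction: "\<And>t \<omega>. \<omega> \<in> space M \<Longrightarrow> N (h ths (x t \<omega>) (u t \<omega>)) \<le> \<rho> * N (x t \<omega>)"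
    using stable by blast
  define A where "A = norm (pol 0) + \<bar>E\<bar>"
  define B where "B = 1 + \<bar>L\<bar>"
  have A: "0 \<le> A" and B: "0 \<le> B" unfolding A_def B_def by simp_all
  have "AE \<omega> in M. sums_linearly_bounded (\<lambda>t. norm (w (Suc t) \<omega>) powr p)"
    by (rule AE_sums_linearly_bounded_noise_powr[OF prob subalg mono w_meas w_moment]) (use p in auto)
  with AE_space show ?thesis
  proof eventually_elim
    case (elim \<omega>)
    have "sums_linearly_bounded (\<lambda>t. norm (x t \<omega>) powr p)"
      by (rule sums_linearly_bounded_powr_of_perturbed_contraction[OF N \<rho> p(1) _ elim(2)])
         (use dyn contraction elim(1) in simp)
    moreover have "norm (x t \<omega>, u t \<omega>) powr p \<le> 2 powr p * A powr p + 2 powr p * B powr p * norm (x t \<omega>) powr p"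
      for t
    proof -
      have "norm (x t \<omega>, u t \<omega>) \<le> A + B * norm (x t \<omega>)"
        unfolding inp[OF elim(1)] A_def B_def by (rule norm_state_input_le[OF pol_lip eps_bound[OF elim(1)]])
      then have "norm (x t \<omega>, u t \<omega>) powr p \<le> (A + B * norm (x t \<omega>)) powr p"
        by (intro powr_mono2) (use p in auto)
      also have "\<dots> \<le> 2 powr p * (A powr p + (B * norm (x t \<omega>)) powr p)"
        by (rule powr_add_le) (use A B p in auto)
      finally show ?thesis using B by (simp add: powr_mult algebra_simps)
    qed
    ultimately show ?case by (rule sums_linearly_bounded_affine[rotated 2]) auto
  qed
qed

lemma norm_le_affine_of_lipschitz:
  fixes J :: "'p::metric_space \<Rightarrow> 'a::real_normed_vector \<Rightarrow> 'b::real_normed_vector \<Rightarrow> 'c::real_normed_vector"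
  assumes "compact K" and cont: "continuous_on K (\<lambda>\<theta>. J \<theta> a0 b0)"
    and lip: "\<And>\<theta> a1 b1 a2 b2. \<theta> \<in> K \<Longrightarrow> norm (J \<theta> a1 b1 - J \<theta> a2 b2) \<le> L * norm ((a1, b1) - (a2, b2))"
    and L: "0 \<le> L"
  obtains B where "\<And>\<theta> a b. \<theta> \<in> K \<Longrightarrow> norm (J \<theta> a b) \<le> B + L * norm (a, b)"
proof -
  obtain B0 where B0: "\<And>\<theta>. \<theta> \<in> K \<Longrightarrow> norm (J \<theta> a0 b0) \<le> B0"
    using compact_imp_bounded[OF compact_continuous_image[OF cont \<open>compact K\<close>]]
    by (auto simp: bounded_iff)
  have "norm (J \<theta> a b) \<le> (B0 + L * norm (a0, b0)) + L * norm (a, b)" if "\<theta> \<in> K" for \<theta> a b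
  proof -
    have "norm (J \<theta> a b) \<le> norm (J \<theta> a0 b0) + norm (J \<theta> a b - J \<theta> a0 b0)" by (rule norm_triangle_sub)
    also have "norm (J \<theta> a b - J \<theta> a0 b0) \<le> L * norm ((a, b) - (a0, b0))" by (rule lip[OF that])
    also have "\<dots> \<le> L * (norm (a, b) + norm (a0, b0))" by (intro mult_left_mono norm_triangle_ineq4 L)
    finally show ?thesis using B0[OF that] by (simp add: algebra_simps)
  qed
  then show thesis by (rule that)
qed

lemma sums_linearly_bounded_square_norm_of_lipschitz:
  fixes J :: "'p::euclidean_space \<Rightarrow> 'a::real_normed_vector \<Rightarrow> 'b::real_normed_vector \<Rightarrow> 'c::real_normed_vector"
  assumes s: "sums_linearly_bounded (\<lambda>t. norm (x t, u t) powr p)" and p: "2 \<le> p"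
    and th: "bounded (range th)"
    and cont: "continuous_on UNIV (\<lambda>\<theta>. J \<theta> a0 b0)"
    and lip: "\<forall>r>0. \<exists>Mr>0. \<forall>\<theta> a1 b1 a2 b2. norm (\<theta> - ths) \<le> r \<longrightarrow>
                 norm (J \<theta> a1 b1 - J \<theta> a2 b2) \<le> Mr * norm ((a1, b1) - (a2, b2))"
  shows "sums_linearly_bounded (\<lambda>t. (norm (J (th t) (x t) (u t)))\<^sup>2)"
proof -
  obtain r where r: "0 < r" "range th \<subseteq> cball ths r"
    using bounded_subset_ballD[OF th, of ths] ball_subset_cball by blast
  obtain L where L: "0 < L" "\<And>\<theta> a1 b1 a2 b2. \<theta> \<in> cball ths r \<Longrightarrow>
      norm (J \<theta> a1 b1 - J \<theta> a2 b2) \<le> L * norm ((a1, b1) - (a2, b2))"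
    using lip r(1) by (auto simp: dist_norm norm_minus_commute)
  obtain B where B: "\<And>\<theta> a b. \<theta> \<in> cball ths r \<Longrightarrow> norm (J \<theta> a b) \<le> B + L * norm (a, b)"
    using norm_le_affine_of_lipschitz[of "cball ths r" J a0 b0 L,
        OF compact_cball continuous_on_subset[OF cont subset_UNIV] L(2)] L(1)
    by auto
  have "(norm (J (th t) (x t) (u t)))\<^sup>2 \<le> (2 * B\<^sup>2 + 2 * L\<^sup>2) + 2 * L\<^sup>2 * norm (x t, u t) powr p" for t
  proof -
    have "th t \<in> cball ths r" by (rule subsetD[OF r(2)]) simp
    then have "(norm (J (th t) (x t) (u t)))\<^sup>2 \<le> (B + L * norm (x t, u t))\<^sup>2"
      by (intro power_mono B) auto
    also have "\<dots> \<le> 2 * B\<^sup>2 + 2 * L\<^sup>2 * (norm (x t, u t))\<^sup>2"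
      using zero_le_square[of "B - L * norm (x t, u t)"] by (simp add: power2_eq_square algebra_simps)
    also have "\<dots> \<le> 2 * B\<^sup>2 + 2 * L\<^sup>2 * (1 + norm (x t, u t) powr p)"
      using powr_le_one_plus_powr[of "norm (x t, u t)" 2 p] p
      by (intro add_left_mono mult_left_mono) (auto simp: powr_numeral)
    finally show ?thesis by (simp add: algebra_simps)
  qed
  then show ?thesis by (rule sums_linearly_bounded_affine[OF _ _ s]) simp
qed

lemma AE_sums_linearly_bounded_square_jacobian:
  fixes J :: "'p::euclidean_space \<Rightarrow> 'a::real_normed_vector \<Rightarrow> 'b::real_normed_vector \<Rightarrow> 'c::real_normed_vector"
    and th :: "nat \<Rightarrow> 'w \<Rightarrow> 'p"
  assumes state_input: "AE \<omega> in M. sums_linearly_bounded (\<lambda>t. norm (x t \<omega>, u t \<omega>) powr p)"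
    and p: "2 \<le> p"
    and cont: "\<forall>t. \<forall>\<omega>\<in>space M. continuous_on UNIV (\<lambda>\<theta>. J \<theta> (x t \<omega>) (u t \<omega>))"
    and lip: "\<forall>r>0. \<exists>Mr>0. \<forall>\<theta> a1 b1 a2 b2. norm (\<theta> - ths) \<le> r \<longrightarrow>
                 norm (J \<theta> a1 b1 - J \<theta> a2 b2) \<le> Mr * norm ((a1, b1) - (a2, b2))"
    and iterates: "\<forall>\<omega>\<in>space M. \<forall>t. norm (th (Suc t) \<omega>) \<le> D"
  shows "AE \<omega> in M. sums_linearly_bounded (\<lambda>t. (norm (J (th t \<omega>) (x t \<omega>) (u t \<omega>)))\<^sup>2)"
  using AE_space state_input
proof eventually_elim
  case (elim \<omega>)
  have "th t \<omega> \<in> insert (th 0 \<omega>) (cball 0 D)" for t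
    using iterates elim(1) by (cases t) auto
  then have "range (\<lambda>t. th t \<omega>) \<subseteq> insert (th 0 \<omega>) (cball 0 D)" by blast
  then have "bounded (range (\<lambda>t. th t \<omega>))" by (rule bounded_subset[rotated]) simp
  then show ?case
    by (rule sums_linearly_bounded_square_norm_of_lipschitz[OF elim(2) p _ _ lip])
       (use cont elim(1) in auto)
qed

theorem mainTheorem5:
  fixes M :: "'w measure" and F :: "nat \<Rightarrow> 'w measure"
    and h :: "real^'p \<Rightarrow> real^'n \<Rightarrow> real^'m \<Rightarrow> real^'n"
    and J :: "real^'p \<Rightarrow> real^'n \<Rightarrow> real^'m \<Rightarrow> real^'p^'n"
    and ths :: "real^'p"
    and x w :: "nat \<Rightarrow> 'w \<Rightarrow> real^'n"
    and u eps :: "nat \<Rightarrow> 'w \<Rightarrow> real^'m"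
    and pol :: "real^'n \<Rightarrow> real^'m"
    and q Lpi epsbar D \<beta> :: real and \<alpha> :: "real \<Rightarrow> real"
    and th :: "nat \<Rightarrow> 'w \<Rightarrow> real^'p" and P :: "nat \<Rightarrow> 'w \<Rightarrow> real^'p^'p"
    and eta :: "nat \<Rightarrow> 'w \<Rightarrow> real"
  assumes prob: "prob_space M"
    \<comment> \<open>nondecreasing sequence of sub-sigma-algebras\<close>
    and subalg: "\<And>t. subalgebra M (F t)"
    and filt_mono: "\<And>t. sets (F t) \<subseteq> sets (F (Suc t))"
    \<comment> \<open>h differentiable in theta with Jacobian J\<close>
    and jac: "\<And>\<theta> a b. ((\<lambda>s. h s a b) has_derivative (\<lambda>v. J \<theta> a b *v v)) (at \<theta>)"
    \<comment> \<open>system dynamics (y_t = x_t) and inputs\<close>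
    and dyn: "\<And>t \<omega>. \<omega> \<in> space M \<Longrightarrow> x (Suc t) \<omega> = h ths (x t \<omega>) (u t \<omega>) + w (Suc t) \<omega>"
    and inp: "\<And>t \<omega>. \<omega> \<in> space M \<Longrightarrow> u t \<omega> = pol (x t \<omega>) + eps t \<omega>"
    and x_meas: "\<And>t. x t \<in> borel_measurable (F t)"
    and u_meas: "\<And>t. u t \<in> borel_measurable (F t)"
    \<comment> \<open>(A2) martingale difference noise with bounded conditional q-th moments\<close>
    and q_gt: "q > 2"
    and w_meas: "\<And>t. w (Suc t) \<in> borel_measurable (F (Suc t))"
    and w_int: "\<And>t i. integrable M (\<lambda>\<omega>. w (Suc t) \<omega> $ i)"
    and w_mds: "\<And>t i. AE \<omega> in M. real_cond_exp M (F t) (\<lambda>\<omega>. w (Suc t) \<omega> $ i) \<omega> = 0"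
    and w_mom: "AE \<omega> in M. (SUP t. nn_cond_exp M (F t)
                  (\<lambda>\<omega>. ennreal (norm (w (Suc t) \<omega>) powr q)) \<omega>) < \<infinity>"
    \<comment> \<open>(A3) Lipschitz policy, bounded exploration, rho-stable closed loop\<close>
    and pol_lip: "\<And>a b. norm (pol a - pol b) \<le> Lpi * norm (a - b)"
    and eps_bd: "\<And>t \<omega>. \<omega> \<in> space M \<Longrightarrow> norm (eps t \<omega>) \<le> epsbar"
    and stable: "\<exists>\<rho> N. 0 < \<rho> \<and> \<rho> < 1 \<and> is_norm N \<and>
                  (\<forall>t. \<forall>\<omega>\<in>space M. N (h ths (x t \<omega>) (u t \<omega>)) \<le> \<rho> * N (x t \<omega>))"
  shows "(\<forall>\<gamma>. 0 < \<gamma> \<and> \<gamma> < q - 2 \<longrightarrow>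
            (AE \<omega> in M. (\<lambda>T. (\<Sum>t<T. norm (x t \<omega>, u t \<omega>) powr (2 + \<gamma>)) / real T)
                          \<in> O(\<lambda>_. 1)))
       \<and> ((\<comment> \<open>(A1)\<close>
            D > 0 \<and> norm ths \<le> D
           \<comment> \<open>(A4)\<close>
           \<and> \<beta> \<ge> 1 \<and> (\<forall>r>0. \<alpha> r > 0)
           \<and> (\<forall>r>0. \<forall>t. \<forall>\<omega>\<in>space M. \<forall>\<theta>.
                 norm (\<theta> - ths) \<le> r \<and> norm (x t \<omega>) \<le> r \<and> norm (u t \<omega>) \<le> r \<longrightarrow>
                   (\<theta> - ths) \<bullet> loss_grad h J ths \<theta> (x t \<omega>) (u t \<omega>)
                      \<ge> \<alpha> r * (norm (J \<theta> (x t \<omega>) (u t \<omega>) *v (\<theta> - ths)))\<^sup>2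
                 \<and> loss h ths \<theta> (x t \<omega>) (u t \<omega>)
                      \<le> \<beta> * ((\<theta> - ths) \<bullet> loss_grad h J ths \<theta> (x t \<omega>) (u t \<omega>)))
           \<and> (\<forall>t. \<forall>\<omega>\<in>space M. continuous_on UNIV (\<lambda>\<theta>. J \<theta> (x t \<omega>) (u t \<omega>)))
           \<and> (\<forall>r>0. \<exists>Mr>0. \<forall>\<theta> a1 b1 a2 b2. norm (\<theta> - ths) \<le> r \<longrightarrow>
                 norm (J \<theta> a1 b1 - J \<theta> a2 b2) \<le> Mr * norm ((a1, b1) - (a2, b2)))
           \<comment> \<open>Algorithm 1\<close>
           \<and> (\<forall>\<omega>\<in>space M. P 0 \<omega> = mat 1 \<and>
               (\<forall>t. let \<phi> = transpose (J (th t \<omega>) (x t \<omega>) (u t \<omega>));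
                       \<alpha>t = \<alpha> (norm (x t \<omega>) + norm (u t \<omega>) + D);
                       \<eta> = eta t \<omega>;
                       \<Gamma> = matrix_inv (mat 1 + \<eta>\<^sup>2 *\<^sub>R (transpose \<phi> ** P t \<omega> ** \<phi>))
                   in \<eta> > 0
                    \<and> P (Suc t) \<omega> = P t \<omega> - \<eta>\<^sup>2 *\<^sub>R (P t \<omega> ** \<phi> ** \<Gamma> ** transpose \<phi> ** P t \<omega>)
                    \<and> \<eta> = 1 / (1 / \<alpha>t + 2 * \<beta> *
                              onorm (\<lambda>v. (transpose \<phi> ** P (Suc t) \<omega> ** \<phi>) *v v))
                    \<and> is_proj (matrix_inv (P (Suc t) \<omega>)) D
                        (th t \<omega> + \<eta> *\<^sub>R ((P (Suc t) \<omega> ** \<phi>) *v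
                                    (x (Suc t) \<omega> - h (th t \<omega>) (x t \<omega>) (u t \<omega>))))
                        (th (Suc t) \<omega>))))
          \<longrightarrow> (AE \<omega> in M. (\<lambda>T. \<Sum>i\<le>T. (norm (transpose (J (th i \<omega>) (x i \<omega>) (u i \<omega>))))\<^sup>2)
                            \<in> O(\<lambda>T. real T)))"
proof -
  have state_input: "AE \<omega> in M. sums_linearly_bounded (\<lambda>t. norm (x t \<omega>, u t \<omega>) powr p)"
    if "1 \<le> p" "p < q" for p
    by (rule AE_sums_linearly_bounded_state_input_powr[where M=M and F=F and h=h and x=x and u=u
          and w=w and eps=eps, OF prob subalg filt_mono dyn inp w_meas w_mom pol_lip eps_bd stable that])
  have "AE \<omega> in M. (\<lambda>T. (\<Sum>t<T. norm (x t \<omega>, u t \<omega>) powr (2 + \<gamma>)) / real T) \<in> O(\<lambda>_. 1)"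
    if "0 < \<gamma>" "\<gamma> < q - 2" for \<gamma>
    using state_input[of "2 + \<gamma>"] that
    by (auto elim!: eventually_mono intro!: bigo_sums_div_of_sums_linearly_bounded)
  moreover have "AE \<omega> in M. (\<lambda>T. \<Sum>i\<le>T. (norm (transpose (J (th i \<omega>) (x i \<omega>) (u i \<omega>))))\<^sup>2)
      \<in> O(\<lambda>T. real T)"
    if "\<forall>t. \<forall>\<omega>\<in>space M. continuous_on UNIV (\<lambda>\<theta>. J \<theta> (x t \<omega>) (u t \<omega>))"
      and "\<forall>r>0. \<exists>Mr>0. \<forall>\<theta> a1 b1 a2 b2. norm (\<theta> - ths) \<le> r \<longrightarrow>
                 norm (J \<theta> a1 b1 - J \<theta> a2 b2) \<le> Mr * norm ((a1, b1) - (a2, b2))"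
      and "\<forall>\<omega>\<in>space M. \<forall>t. norm (th (Suc t) \<omega>) \<le> D"
    \<comment> \<open>any exponent in \<open>[2, q)\<close> will do\<close>
    using AE_sums_linearly_bounded_square_jacobian[OF state_input[of "(q + 2) / 2"] _ that] q_gt
    by (auto simp: norm_transpose elim!: eventually_mono intro!: bigo_sums_atMost_of_sums_linearly_bounded)
  ultimately show ?thesis
    by (intro conjI allI impI) (auto simp: Let_def is_proj_def)
qed

end
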